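(* Let $k\ge1$, $a_0,a_1,\dots,a_m\in\mathbb{R}^{2k}$, and let $p(x)=a_m\circledast x^m+a_{m-1}\circledast x^{m-1}+\dots+a_1\circledast x+a_0$ for $x\in\mathbb{R}^{2k}$, where $x^j$ denotes the $j$-fold $\circledast$-product of $x$ with itself. Writing $p=[p_1,\dots,p_{2k}]$, each component $p_j$ is a harmonic polynomial on $\mathbb{R}^{2k}$, i.e. a real polynomial in $x_1,\dots,x_{2k}$ with $\sum_{i=1}^{2k}\partial^2p_j/\partial x_i^2=0$.
   Context: Let $n=2k$ and let $\mathfrak g$ be the real $n\times n$ matrix with $\mathfrak g_{i,i+1}=1$ ($1\le i\le n-1$), $\mathfrak g_{n,1}=-1$, other entries $0$. For $u\in\mathbb{R}^n$ set $\varsigma(u)=\sum_{\ell=1}^n u_\ell\mathfrak g^{\ell-1}$ and $u\circledast v=\varsigma^{-1}(\varsigma(u)\varsigma(v))$; this is a commutative associative algebra with identity $e_1$. *)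

theory Defs
  imports "HOL-Analysis.Analysis"
begin

text \<open>Vectors in R^n are modelled as functions nat => real, component i (0-based)
  standing for the paper's component i+1; only components below n are meaningful.
  n x n matrices are modelled as nat => nat => real (0-based indices below n).\<close>

definition vspace :: "nat \<Rightarrow> (nat \<Rightarrow> real) set" where
  "vspace n = {u. \<forall>j\<ge>n. u j = 0}"

definition mat_mult :: "nat \<Rightarrow> (nat \<Rightarrow> nat \<Rightarrow> real) \<Rightarrow> (nat \<Rightarrow> nat \<Rightarrow> real) \<Rightarrow> nat \<Rightarrow> nat \<Rightarrow> real" where
  "mat_mult n A B = (\<lambda>i j. \<Sum>l<n. A i l * B l j)"

definition mat_id :: "nat \<Rightarrow> nat \<Rightarrow> nat \<Rightarrow> real" where
  "mat_id n = (\<lambda>i j. if i = j \<and> i < n then 1 else 0)"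

fun mat_pow :: "nat \<Rightarrow> (nat \<Rightarrow> nat \<Rightarrow> real) \<Rightarrow> nat \<Rightarrow> nat \<Rightarrow> nat \<Rightarrow> real" where
  "mat_pow n A 0 = mat_id n"
| "mat_pow n A (Suc m) = mat_mult n A (mat_pow n A m)"

definition gmat :: "nat \<Rightarrow> nat \<Rightarrow> nat \<Rightarrow> real" where
  "gmat n = (\<lambda>i j. if i + 1 < n \<and> j = i + 1 then 1
                   else if 0 < n \<and> i = n - 1 \<and> j = 0 then -1 else 0)"

definition vsig :: "nat \<Rightarrow> (nat \<Rightarrow> real) \<Rightarrow> nat \<Rightarrow> nat \<Rightarrow> real" where
  "vsig n u = (\<lambda>i j. \<Sum>l<n. u l * mat_pow n (gmat n) l i j)"

definition cmult :: "nat \<Rightarrow> (nat \<Rightarrow> real) \<Rightarrow> (nat \<Rightarrow> real) \<Rightarrow> nat \<Rightarrow> real" where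
  "cmult n u v = (THE w. w \<in> vspace n \<and> vsig n w = mat_mult n (vsig n u) (vsig n v))"

definition e1 :: "nat \<Rightarrow> real" where
  "e1 = (\<lambda>j. if j = 0 then 1 else 0)"

fun cpow :: "nat \<Rightarrow> (nat \<Rightarrow> real) \<Rightarrow> nat \<Rightarrow> nat \<Rightarrow> real" where
  "cpow n x 0 = e1"
| "cpow n x (Suc m) = cmult n x (cpow n x m)"

definition cpoly :: "nat \<Rightarrow> (nat \<Rightarrow> nat \<Rightarrow> real) \<Rightarrow> nat \<Rightarrow> (nat \<Rightarrow> real) \<Rightarrow> nat \<Rightarrow> real" where
  "cpoly n a m x = (\<lambda>j. \<Sum>i\<le>m. cmult n (a i) (cpow n x i) j)"

definition real_poly_fun :: "nat \<Rightarrow> ((nat \<Rightarrow> real) \<Rightarrow> real) \<Rightarrow> bool" where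
  "real_poly_fun n f \<longleftrightarrow> (\<exists>S c. finite S \<and> (\<forall>\<alpha>\<in>S. \<forall>i\<ge>n. \<alpha> i = 0) \<and>
      (\<forall>x. f x = (\<Sum>\<alpha>\<in>S. c \<alpha> * (\<Prod>i<n. x i ^ \<alpha> i))))"

definition partial_d :: "nat \<Rightarrow> ((nat \<Rightarrow> real) \<Rightarrow> real) \<Rightarrow> (nat \<Rightarrow> real) \<Rightarrow> real" where
  "partial_d i f = (\<lambda>x. deriv (\<lambda>t. f (x(i := t))) (x i))"

definition laplacian :: "nat \<Rightarrow> ((nat \<Rightarrow> real) \<Rightarrow> real) \<Rightarrow> (nat \<Rightarrow> real) \<Rightarrow> real" where
  "laplacian n f = (\<lambda>x. \<Sum>i<n. partial_d i (partial_d i f) x)"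

definition harmonic_poly :: "nat \<Rightarrow> ((nat \<Rightarrow> real) \<Rightarrow> real) \<Rightarrow> bool" where
  "harmonic_poly n f \<longleftrightarrow> real_poly_fun n f \<and> (\<forall>x. laplacian n f x = 0)"

end

theory Submission
  imports Defs
begin

(* Via \<sigma>, (R^2k, \<circledast>) is the commutative algebra R[g], in which g^2k = -I and the unit
  vector e_i corresponds to g^(i-1). Since \<circledast> is bilinear with constant structure
  coefficients, every component of p is a real polynomial, and the product rule gives
  \<partial>p/\<partial>x_i (x) = p'(x) \<circledast> e_i. Hence \<Delta>p(x) = p''(x) \<circledast> \<Sum>_(i<2k) g^2i, and this sum
  vanishes because g^2(i+k) = -g^2i. *)

abbreviation gpow :: "nat \<Rightarrow> nat \<Rightarrow> nat \<Rightarrow> nat \<Rightarrow> real" where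
  "gpow n l \<equiv> mat_pow n (gmat n) l"

lemma gmat_mult_row:
  assumes "0 < n"
  shows "(\<Sum>l<n. gmat n i l * X l) = (if i + 1 < n then X (i + 1) else if i = n - 1 then - X 0 else 0)"
proof -
  consider "i + 1 < n" | "i = n - 1" | "n \<le> i" by linarith
  then show ?thesis
  proof cases
    case 1
    then have "gmat n i l * X l = (if l = i + 1 then X l else 0)" for l
      by (auto simp: gmat_def)
    with 1 show ?thesis by simp
  next
    case 2
    then have "gmat n i l * X l = (if l = 0 then - X l else 0)" for l
      using assms by (auto simp: gmat_def)
    with 2 assms show ?thesis by simp
  next
    case 3
    then show ?thesis using assms by (simp add: gmat_def)
  qed
qed

lemma gpow_eq:
  assumes "0 < n"
  shows "gpow n l i j = (if i < n \<and> j < n \<and> (i + l) mod n = j then (-1) ^ ((i + l) div n) else 0)"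
proof (induction l arbitrary: i)
  case 0
  then show ?case by (auto simp: mat_id_def)
next
  case (Suc l)
  have "gpow n (Suc l) i j = (\<Sum>r<n. gmat n i r * gpow n l r j)"
    by (simp add: mat_mult_def)
  also have "\<dots> = (if i + 1 < n then gpow n l (i + 1) j else if i = n - 1 then - gpow n l 0 j else 0)"
    by (rule gmat_mult_row[OF assms])
  also have "\<dots> = (if i < n \<and> j < n \<and> (i + Suc l) mod n = j then (-1) ^ ((i + Suc l) div n) else 0)"
  proof -
    consider "i + 1 < n" | "i = n - 1" | "n \<le> i" by linarith
    then show ?thesis
    proof cases
      case 2
      then have "i + Suc l = n + l" using assms by simp
      with 2 Suc assms show ?thesis by auto
    qed (use Suc assms in simp_all)
  qed
  finally show ?case .
qed

lemma mat_mult_assoc: "mat_mult n (mat_mult n A B) C = mat_mult n A (mat_mult n B C)"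
  unfolding mat_mult_def
  by (rule ext, rule ext, simp add: sum_distrib_left sum_distrib_right mult.assoc, rule sum.swap)

lemma gpow_add:
  assumes "0 < n"
  shows "gpow n (a + b) = mat_mult n (gpow n a) (gpow n b)"
proof (induction a)
  case 0
  have "mat_mult n (mat_id n) (gpow n b) i j = gpow n b i j" for i j
  proof -
    have "mat_mult n (mat_id n) (gpow n b) i j = (\<Sum>l<n. if l = i then (if i < n then gpow n b l j else 0) else 0)"
      unfolding mat_mult_def by (rule sum.cong) (simp_all add: mat_id_def)
    also have "\<dots> = gpow n b i j" by (simp add: gpow_eq[OF assms])
    finally show ?thesis .
  qed
  then show ?case by auto
next
  case (Suc a)
  then show ?case by (simp add: mat_mult_assoc)
qed

text \<open>Since \<open>g^n = -I\<close>, the power \<open>g^s\<close> is \<open>\<plusminus>g^(s mod n)\<close>, that is, \<open>\<sigma>\<close> of the vector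
  \<open>gcoords n s\<close>.\<close>

definition gcoords :: "nat \<Rightarrow> nat \<Rightarrow> nat \<Rightarrow> real" where
  "gcoords n s = (\<lambda>l. if l = s mod n then (-1) ^ (s div n) else 0)"

lemma gpow_mod:
  assumes "0 < n"
  shows "gpow n s i j = (-1) ^ (s div n) * gpow n (s mod n) i j"
proof -
  have "i + s = (i + s mod n) + s div n * n" by simp
  then have "(i + s) div n = s div n + (i + s mod n) div n"
    using assms by (metis add.commute div_mult_self1 less_not_refl2)
  moreover have "(i + s) mod n = (i + s mod n) mod n" by (simp add: mod_add_right_eq)
  ultimately show ?thesis by (simp add: gpow_eq[OF assms] power_add)
qed

lemma vsig_gcoords:
  assumes "0 < n"
  shows "vsig n (gcoords n s) = gpow n s"
proof (intro ext)
  fix i j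
  have "vsig n (gcoords n s) i j = (\<Sum>l<n. if l = s mod n then (-1) ^ (s div n) * gpow n l i j else 0)"
    unfolding vsig_def gcoords_def by (rule sum.cong) auto
  also have "\<dots> = gpow n s i j" using assms by (simp add: gpow_mod[OF assms, of s])
  finally show "vsig n (gcoords n s) i j = gpow n s i j" .
qed

lemma vsig_first_row:
  assumes "0 < n"
  shows "vsig n u 0 j = (if j < n then u j else 0)"
proof -
  have "vsig n u 0 j = (\<Sum>l<n. if l = j then (if j < n then u j else 0) else 0)"
    unfolding vsig_def by (rule sum.cong) (auto simp: gpow_eq[OF assms])
  then show ?thesis by simp
qed

lemma inj_on_vsig:
  assumes "0 < n"
  shows "inj_on (vsig n) (vspace n)"
proof (rule inj_onI, rule ext)
  fix u v j
  assume "u \<in> vspace n" "v \<in> vspace n" "vsig n u = vsig n v"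
  then show "u j = v j"
    using vsig_first_row[OF assms, of u j] vsig_first_row[OF assms, of v j]
    by (cases "j < n") (auto simp: vspace_def)
qed

lemma mat_mult_vsig:
  assumes "0 < n"
  shows "mat_mult n (vsig n u) (vsig n v) i j = (\<Sum>a<n. \<Sum>b<n. u a * v b * gpow n (a + b) i j)"
proof -
  have "mat_mult n (vsig n u) (vsig n v) i j = (\<Sum>r<n. \<Sum>a<n. \<Sum>b<n. u a * v b * (gpow n a i r * gpow n b r j))"
    unfolding mat_mult_def vsig_def by (simp add: sum_product mult_ac)
  also have "\<dots> = (\<Sum>a<n. \<Sum>r<n. \<Sum>b<n. u a * v b * (gpow n a i r * gpow n b r j))"
    by (rule sum.swap)
  also have "\<dots> = (\<Sum>a<n. \<Sum>b<n. \<Sum>r<n. u a * v b * (gpow n a i r * gpow n b r j))"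
    by (rule sum.cong[OF refl], rule sum.swap)
  also have "\<dots> = (\<Sum>a<n. \<Sum>b<n. u a * v b * gpow n (a + b) i j)"
    by (simp add: gpow_add[OF assms] mat_mult_def sum_distrib_left)
  finally show ?thesis .
qed

lemma convolution_in_vspace:
  assumes "0 < n"
  shows "(\<lambda>l. \<Sum>a<n. \<Sum>b<n. u a * v b * gcoords n (a + b) l) \<in> vspace n"
proof -
  have "gcoords n s l = 0" if "n \<le> l" for s l
    using that mod_less_divisor[OF assms, of s] by (simp add: gcoords_def)
  then show ?thesis by (simp add: vspace_def)
qed

lemma vsig_convolution:
  assumes "0 < n"
  shows "vsig n (\<lambda>l. \<Sum>a<n. \<Sum>b<n. u a * v b * gcoords n (a + b) l) = mat_mult n (vsig n u) (vsig n v)"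
proof (intro ext)
  fix i j
  have "vsig n (\<lambda>l. \<Sum>a<n. \<Sum>b<n. u a * v b * gcoords n (a + b) l) i j
      = (\<Sum>l<n. \<Sum>a<n. \<Sum>b<n. u a * v b * (gcoords n (a + b) l * gpow n l i j))"
    unfolding vsig_def by (simp add: sum_distrib_left sum_distrib_right mult_ac)
  also have "\<dots> = (\<Sum>a<n. \<Sum>l<n. \<Sum>b<n. u a * v b * (gcoords n (a + b) l * gpow n l i j))"
    by (rule sum.swap)
  also have "\<dots> = (\<Sum>a<n. \<Sum>b<n. \<Sum>l<n. u a * v b * (gcoords n (a + b) l * gpow n l i j))"
    by (rule sum.cong[OF refl], rule sum.swap)
  also have "\<dots> = (\<Sum>a<n. \<Sum>b<n. u a * v b * vsig n (gcoords n (a + b)) i j)"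
    by (simp add: vsig_def sum_distrib_left)
  also have "\<dots> = mat_mult n (vsig n u) (vsig n v) i j"
    by (simp add: vsig_gcoords[OF assms] mat_mult_vsig[OF assms])
  finally show "vsig n (\<lambda>l. \<Sum>a<n. \<Sum>b<n. u a * v b * gcoords n (a + b) l) i j
      = mat_mult n (vsig n u) (vsig n v) i j" .
qed

lemma cmult_eq:
  assumes "0 < n"
  shows "cmult n u v = (\<lambda>l. \<Sum>a<n. \<Sum>b<n. u a * v b * gcoords n (a + b) l)"
    (is "_ = ?w")
proof -
  have w: "?w \<in> vspace n" "vsig n ?w = mat_mult n (vsig n u) (vsig n v)"
    using convolution_in_vspace[OF assms] vsig_convolution[OF assms] by blast+
  show ?thesis
    unfolding cmult_def
  proof (rule the_equality)
    fix w' assume "w' \<in> vspace n \<and> vsig n w' = mat_mult n (vsig n u) (vsig n v)"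
    with w show "w' = ?w" by (intro inj_onD[OF inj_on_vsig[OF assms]]) auto
  qed (use w in blast)
qed

lemma cmult_in_vspace: "0 < n \<Longrightarrow> cmult n u v \<in> vspace n"
  by (simp add: cmult_eq convolution_in_vspace)

lemma vsig_cmult: "0 < n \<Longrightarrow> vsig n (cmult n u v) = mat_mult n (vsig n u) (vsig n v)"
  by (simp add: cmult_eq vsig_convolution)

lemma cmult_commute:
  assumes "0 < n"
  shows "cmult n u v = cmult n v u"
  unfolding cmult_eq[OF assms] by (rule ext, subst sum.swap) (simp add: ac_simps)

lemma cmult_assoc:
  assumes "0 < n"
  shows "cmult n (cmult n u v) w = cmult n u (cmult n v w)"
  by (rule inj_onD[OF inj_on_vsig[OF assms]])
     (simp_all add: vsig_cmult[OF assms] cmult_in_vspace[OF assms] mat_mult_assoc)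

lemma cmult_left_commute:
  assumes "0 < n"
  shows "cmult n u (cmult n v w) = cmult n v (cmult n u w)"
  by (metis cmult_assoc[OF assms] cmult_commute[OF assms])

lemma cmult_scale_right: "0 < n \<Longrightarrow> cmult n u (\<lambda>l. c * v l) = (\<lambda>j. c * cmult n u v j)"
  by (simp add: cmult_eq sum_distrib_left mult_ac)

lemma cmult_zero_left: "0 < n \<Longrightarrow> cmult n (\<lambda>_. 0) v = (\<lambda>_. 0)"
  by (simp add: cmult_eq)

lemma cmult_zero_right: "0 < n \<Longrightarrow> cmult n u (\<lambda>_. 0) = (\<lambda>_. 0)"
  by (simp add: cmult_eq)

lemma cmult_sum_left:
  assumes "0 < n"
  shows "cmult n (\<lambda>l. \<Sum>i\<in>I. f i l) v = (\<lambda>j. \<Sum>i\<in>I. cmult n (f i) v j)"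
proof (intro ext)
  fix j
  have "cmult n (\<lambda>l. \<Sum>i\<in>I. f i l) v j = (\<Sum>a<n. \<Sum>b<n. \<Sum>i\<in>I. f i a * v b * gcoords n (a + b) j)"
    by (simp add: cmult_eq[OF assms] sum_distrib_right)
  also have "\<dots> = (\<Sum>a<n. \<Sum>i\<in>I. \<Sum>b<n. f i a * v b * gcoords n (a + b) j)"
    by (rule sum.cong[OF refl], rule sum.swap)
  also have "\<dots> = (\<Sum>i\<in>I. cmult n (f i) v j)"
    by (subst sum.swap) (simp add: cmult_eq[OF assms])
  finally show "cmult n (\<lambda>l. \<Sum>i\<in>I. f i l) v j = (\<Sum>i\<in>I. cmult n (f i) v j)" .
qed

definition unitv :: "nat \<Rightarrow> nat \<Rightarrow> real" where
  "unitv i = (\<lambda>l. if l = i then 1 else 0)"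

lemma cmult_unitv_unitv:
  assumes "0 < n" "i < n"
  shows "cmult n (unitv i) (unitv i) = gcoords n (i + i)"
proof (intro ext)
  fix l
  have "unitv i a * unitv i b * x = (if b = i then if a = i then x else 0 else 0)" for a b x
    by (simp add: unitv_def)
  then show "cmult n (unitv i) (unitv i) l = gcoords n (i + i) l"
    using assms by (simp add: cmult_eq)
qed

lemma gcoords_add_period: "0 < n \<Longrightarrow> gcoords n (s + n) = (\<lambda>l. - gcoords n s l)"
  by (simp add: gcoords_def fun_eq_iff)

text \<open>This is the only place where \<open>n\<close> is even: \<open>unitv i\<close> represents \<open>g^i\<close>, and \<open>g^(2k) = -I\<close>
  cancels the square of \<open>g^(i+k)\<close> against that of \<open>g^i\<close>.\<close>

lemma sum_unitv_sq:
  assumes "0 < k"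
  shows "(\<lambda>l. \<Sum>i<2 * k. cmult (2 * k) (unitv i) (unitv i) l) = (\<lambda>_. 0)"
proof
  fix l
  let ?c = "\<lambda>i. gcoords (2 * k) (i + i) l"
  have "(\<Sum>i<2 * k. cmult (2 * k) (unitv i) (unitv i) l) = (\<Sum>i<k + k. ?c i)"
    using assms by (intro sum.cong) (auto simp: cmult_unitv_unitv)
  also have "\<dots> = (\<Sum>i<k. ?c i) + (\<Sum>i\<in>{k..<k + k}. ?c i)"
    using sum.atLeastLessThan_concat[where m=0 and n=k and p="k + k" and g="?c"]
    by (simp add: atLeast0LessThan)
  also have "(\<Sum>i\<in>{k..<k + k}. ?c i) = (\<Sum>i<k. ?c (i + k))"
    by (simp add: sum.atLeastLessThan_shift_0 atLeast0LessThan add.commute)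
  also have "\<dots> = - (\<Sum>i<k. ?c i)"
  proof -
    have "?c (i + k) = - ?c i" for i
    proof -
      have "?c (i + k) = gcoords (2 * k) ((i + i) + 2 * k) l"
        by (rule arg_cong[where f = "\<lambda>s. gcoords (2 * k) s l"]) simp
      also have "\<dots> = - ?c i"
        using assms by (simp only: gcoords_add_period zero_less_mult_iff zero_less_numeral simp_thms)
      finally show ?thesis .
    qed
    then show ?thesis by (simp add: sum_negf)
  qed
  finally show "(\<Sum>i<2 * k. cmult (2 * k) (unitv i) (unitv i) l) = 0" by simp
qed

lemma sum_cmult_unitv_sq:
  assumes "0 < k"
  shows "(\<lambda>l. \<Sum>i<2 * k. cmult (2 * k) (cmult (2 * k) c (unitv i)) (unitv i) l) = (\<lambda>_. 0)"
proof -
  have n: "0 < 2 * k" using assms by simp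
  have "cmult (2 * k) (cmult (2 * k) c (unitv i)) (unitv i) = cmult (2 * k) (cmult (2 * k) (unitv i) (unitv i)) c" for i
    by (metis cmult_assoc[OF n] cmult_commute[OF n])
  then have "(\<lambda>l. \<Sum>i<2 * k. cmult (2 * k) (cmult (2 * k) c (unitv i)) (unitv i) l)
      = cmult (2 * k) (\<lambda>l. \<Sum>i<2 * k. cmult (2 * k) (unitv i) (unitv i) l) c"
    by (simp add: cmult_sum_left[OF n])
  then show ?thesis by (simp add: sum_unitv_sq[OF assms] cmult_zero_left[OF n])
qed

definition has_comp_deriv :: "(real \<Rightarrow> nat \<Rightarrow> real) \<Rightarrow> (nat \<Rightarrow> real) \<Rightarrow> real \<Rightarrow> bool" where
  "has_comp_deriv U D t \<longleftrightarrow> (\<forall>j. ((\<lambda>s. U s j) has_real_derivative D j) (at t))"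

lemma has_comp_deriv_const: "has_comp_deriv (\<lambda>s. c) (\<lambda>_. 0) t"
  by (simp add: has_comp_deriv_def)

lemma has_comp_deriv_fun_upd: "has_comp_deriv (\<lambda>s. x(i := s)) (unitv i) t"
  unfolding has_comp_deriv_def
proof
  fix j
  show "((\<lambda>s. (x(i := s)) j) has_real_derivative unitv i j) (at t)"
    by (cases "j = i") (simp_all add: unitv_def)
qed

lemma has_comp_deriv_cmult:
  assumes "0 < n" "has_comp_deriv U DU t" "has_comp_deriv V DV t"
  shows "has_comp_deriv (\<lambda>s. cmult n (U s) (V s)) (\<lambda>j. cmult n DU (V t) j + cmult n (U t) DV j) t"
  unfolding has_comp_deriv_def
proof
  fix j
  have "((\<lambda>s. \<Sum>a<n. \<Sum>b<n. gcoords n (a + b) j * U s a * V s b) has_real_derivative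
      (\<Sum>a<n. \<Sum>b<n. gcoords n (a + b) j * DU a * V t b + DV b * (gcoords n (a + b) j * U t a))) (at t)"
    using assms(2,3) unfolding has_comp_deriv_def by (intro DERIV_sum DERIV_mult DERIV_cmult) auto
  then show "((\<lambda>s. cmult n (U s) (V s) j) has_real_derivative cmult n DU (V t) j + cmult n (U t) DV j) (at t)"
    by (simp add: cmult_eq[OF assms(1)] sum.distrib mult_ac)
qed

lemma has_comp_deriv_cpow:
  assumes "0 < n" "has_comp_deriv U DU t"
  shows "has_comp_deriv (\<lambda>s. cpow n (U s) r) (\<lambda>j. real r * cmult n DU (cpow n (U t) (r - 1)) j) t"
proof (induction r)
  case 0
  show ?case by (simp add: has_comp_deriv_def)
next
  case (Suc r)
  have "cmult n DU (cpow n (U t) r) j + cmult n (U t) (\<lambda>j. real r * cmult n DU (cpow n (U t) (r - 1)) j) j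
      = real (Suc r) * cmult n DU (cpow n (U t) r) j" for j
  proof (cases r)
    case (Suc r')
    then have "cmult n (U t) (cmult n DU (cpow n (U t) (r - 1))) = cmult n DU (cpow n (U t) r)"
      by (simp add: cmult_left_commute[OF assms(1)])
    then show ?thesis
      by (simp add: cmult_scale_right[OF assms(1)] algebra_simps)
  qed (simp add: cmult_zero_right[OF assms(1)])
  then show ?case
    using has_comp_deriv_cmult[OF assms Suc] by simp
qed

text \<open>Terms with \<open>e r = 0\<close> acquire the weight \<open>real (e r) = 0\<close> under differentiation, so the
  truncated exponent \<open>e r - 1\<close> does no harm.\<close>

definition cmonomial_sum ::
    "nat \<Rightarrow> 'a set \<Rightarrow> ('a \<Rightarrow> real) \<Rightarrow> ('a \<Rightarrow> nat \<Rightarrow> real) \<Rightarrow> ('a \<Rightarrow> nat) \<Rightarrow> (nat \<Rightarrow> real) \<Rightarrow> nat \<Rightarrow> real" where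
  "cmonomial_sum n I s c e y = (\<lambda>j. \<Sum>r\<in>I. s r * cmult n (c r) (cpow n y (e r)) j)"

lemma partial_d_cmonomial_sum:
  assumes "0 < n"
  shows "partial_d i (\<lambda>y. cmonomial_sum n I s c e y j)
       = (\<lambda>y. cmonomial_sum n I (\<lambda>r. real (e r) * s r) (\<lambda>r. cmult n (c r) (unitv i)) (\<lambda>r. e r - 1) y j)"
proof (intro ext)
  fix y
  have "((\<lambda>t. cmult n (c r) (cpow n (y(i := t)) (e r)) j) has_real_derivative
      real (e r) * cmult n (cmult n (c r) (unitv i)) (cpow n y (e r - 1)) j) (at (y i))" for r
    using has_comp_deriv_cmult[OF assms has_comp_deriv_const
        has_comp_deriv_cpow[OF assms has_comp_deriv_fun_upd[of y i "y i"]]]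
    by (simp add: has_comp_deriv_def cmult_zero_left[OF assms] cmult_scale_right[OF assms] cmult_assoc[OF assms])
  then have "((\<lambda>t. cmonomial_sum n I s c e (y(i := t)) j) has_real_derivative
      cmonomial_sum n I (\<lambda>r. real (e r) * s r) (\<lambda>r. cmult n (c r) (unitv i)) (\<lambda>r. e r - 1) y j) (at (y i))"
    unfolding cmonomial_sum_def by (rule DERIV_cong[OF DERIV_sum[OF DERIV_cmult]]) (simp_all add: mult_ac)
  then show "partial_d i (\<lambda>y. cmonomial_sum n I s c e y j) y
      = cmonomial_sum n I (\<lambda>r. real (e r) * s r) (\<lambda>r. cmult n (c r) (unitv i)) (\<lambda>r. e r - 1) y j"
    unfolding partial_d_def by (rule DERIV_imp_deriv)
qed

lemma laplacian_cmonomial_sum: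
  assumes "0 < k"
  shows "laplacian (2 * k) (\<lambda>y. cmonomial_sum (2 * k) I s c e y j) x = 0"
proof -
  have n: "0 < 2 * k" using assms by simp
  define w where "w r = real (e r - 1) * (real (e r) * s r)" for r
  have "laplacian (2 * k) (\<lambda>y. cmonomial_sum (2 * k) I s c e y j) x
      = (\<Sum>i<2 * k. \<Sum>r\<in>I. w r * cmult (2 * k) (cmult (2 * k) (cmult (2 * k) (c r) (unitv i)) (unitv i))
          (cpow (2 * k) x (e r - 1 - 1)) j)"
    unfolding laplacian_def partial_d_cmonomial_sum[OF n] by (simp add: cmonomial_sum_def w_def)
  also have "\<dots> = (\<Sum>r\<in>I. w r * cmult (2 * k) (\<lambda>l. \<Sum>i<2 * k. cmult (2 * k) (cmult (2 * k) (c r) (unitv i)) (unitv i) l)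
          (cpow (2 * k) x (e r - 1 - 1)) j)"
    by (subst sum.swap) (simp add: cmult_sum_left[OF n] sum_distrib_left)
  also have "\<dots> = 0"
    by (simp add: sum_cmult_unitv_sq[OF assms] cmult_zero_left[OF n])
  finally show ?thesis .
qed

lemma real_poly_funI:
  fixes P :: "'p set" and \<phi> :: "'p \<Rightarrow> nat \<Rightarrow> nat"
  assumes fin: "finite P" and z: "\<forall>p\<in>P. \<forall>i\<ge>n. \<phi> p i = 0"
    and f: "\<forall>x. f x = (\<Sum>p\<in>P. h p * (\<Prod>i<n. x i ^ \<phi> p i))"
  shows "real_poly_fun n f"
  unfolding real_poly_fun_def
proof (intro exI conjI allI)
  show "finite (\<phi> ` P)" using fin by simp
  show "\<forall>\<alpha>\<in>\<phi> ` P. \<forall>i\<ge>n. \<alpha> i = 0" using z by auto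
  fix x
  have "(\<Sum>\<alpha>\<in>\<phi> ` P. (\<Sum>p\<in>{p \<in> P. \<phi> p = \<alpha>}. h p) * (\<Prod>i<n. x i ^ \<alpha> i))
      = (\<Sum>\<alpha>\<in>\<phi> ` P. \<Sum>p\<in>{p \<in> P. \<phi> p = \<alpha>}. h p * (\<Prod>i<n. x i ^ \<phi> p i))"
    by (intro sum.cong refl) (simp add: sum_distrib_right)
  also have "\<dots> = (\<Sum>p\<in>P. h p * (\<Prod>i<n. x i ^ \<phi> p i))"
    by (rule sum.group) (use fin in auto)
  finally show "f x = (\<Sum>\<alpha>\<in>\<phi> ` P. (\<Sum>p\<in>{p \<in> P. \<phi> p = \<alpha>}. h p) * (\<Prod>i<n. x i ^ \<alpha> i))"
    using f by simp
qed

lemma real_poly_fun_const: "real_poly_fun n (\<lambda>x. c)"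
  by (rule real_poly_funI[where P="{()}" and \<phi>="\<lambda>_ _. 0" and h="\<lambda>_. c"]) auto

lemma real_poly_fun_var:
  assumes "i < n" shows "real_poly_fun n (\<lambda>x. x i)"
proof -
  have e: "\<forall>x::nat\<Rightarrow>real. x i = (\<Sum>p\<in>{()}. 1 * (\<Prod>l<n. x l ^ (if l = i then 1 else 0)))"
  proof
    fix x :: "nat \<Rightarrow> real"
    have "(\<Prod>l<n. x l ^ (if l = i then 1 else 0)) = (\<Prod>l<n. if l = i then x l else 1)"
      by (rule prod.cong) auto
    thus "x i = (\<Sum>p\<in>{()}. 1 * (\<Prod>l<n. x l ^ (if l = i then 1 else 0)))" using assms by simp
  qed
  show ?thesis
    by (rule real_poly_funI[where P="{()}" and \<phi>="\<lambda>_ l. if l = i then 1 else 0" and h="\<lambda>_. 1"])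
       (use assms e in auto)
qed

lemma real_poly_fun_add:
  assumes "real_poly_fun n f" "real_poly_fun n g"
  shows "real_poly_fun n (\<lambda>x. f x + g x)"
proof -
  obtain S c where S: "finite S" "\<forall>\<alpha>\<in>S. \<forall>i\<ge>n. \<alpha> i = 0" "\<forall>x. f x = (\<Sum>\<alpha>\<in>S. c \<alpha> * (\<Prod>i<n. x i ^ \<alpha> i))"
    using assms(1) unfolding real_poly_fun_def by blast
  obtain T d where T: "finite T" "\<forall>\<alpha>\<in>T. \<forall>i\<ge>n. \<alpha> i = 0" "\<forall>x. g x = (\<Sum>\<alpha>\<in>T. d \<alpha> * (\<Prod>i<n. x i ^ \<alpha> i))"
    using assms(2) unfolding real_poly_fun_def by blast
  show ?thesis
    by (rule real_poly_funI[where P="S <+> T" and \<phi>="case_sum (\<lambda>\<alpha>. \<alpha>) (\<lambda>\<alpha>. \<alpha>)" and h="case_sum c d"])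
       (use S T in \<open>auto simp: sum.Plus comp_def\<close>)
qed

lemma real_poly_fun_mult:
  assumes "real_poly_fun n f" "real_poly_fun n g"
  shows "real_poly_fun n (\<lambda>x. f x * g x)"
proof -
  obtain S c where S: "finite S" "\<forall>\<alpha>\<in>S. \<forall>i\<ge>n. \<alpha> i = 0" "\<forall>x. f x = (\<Sum>\<alpha>\<in>S. c \<alpha> * (\<Prod>i<n. x i ^ \<alpha> i))"
    using assms(1) unfolding real_poly_fun_def by blast
  obtain T d where T: "finite T" "\<forall>\<alpha>\<in>T. \<forall>i\<ge>n. \<alpha> i = 0" "\<forall>x. g x = (\<Sum>\<alpha>\<in>T. d \<alpha> * (\<Prod>i<n. x i ^ \<alpha> i))"
    using assms(2) unfolding real_poly_fun_def by blast
  show ?thesis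
  proof (rule real_poly_funI[where P = "S \<times> T" and \<phi> = "\<lambda>p i. fst p i + snd p i"
        and h = "\<lambda>p. c (fst p) * d (snd p)"])
    show "finite (S \<times> T)" using S T by simp
    show "\<forall>p\<in>S \<times> T. \<forall>i\<ge>n. fst p i + snd p i = 0" using S T by auto
    show "\<forall>x. f x * g x = (\<Sum>p\<in>S \<times> T. c (fst p) * d (snd p) * (\<Prod>i<n. x i ^ (fst p i + snd p i)))"
    proof
      fix x :: "nat \<Rightarrow> real"
      have "f x * g x = (\<Sum>\<alpha>\<in>S. \<Sum>\<beta>\<in>T. c \<alpha> * d \<beta> * (\<Prod>i<n. x i ^ (\<alpha> i + \<beta> i)))"
        using S T by (simp add: sum_product power_add prod.distrib mult_ac)
      then show "f x * g x = (\<Sum>p\<in>S \<times> T. c (fst p) * d (snd p) * (\<Prod>i<n. x i ^ (fst p i + snd p i)))"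
        by (simp add: sum.cartesian_product case_prod_unfold)
    qed
  qed
qed

lemma real_poly_fun_sum:
  assumes "finite I" "\<forall>i\<in>I. real_poly_fun n (f i)"
  shows "real_poly_fun n (\<lambda>x. \<Sum>i\<in>I. f i x)"
  using assms
proof (induction I rule: finite_induct)
  case empty
  then show ?case using real_poly_fun_const[of n 0] by simp
next
  case (insert a F)
  then show ?case using real_poly_fun_add[of n "f a" "\<lambda>x. \<Sum>i\<in>F. f i x"] by simp
qed

lemma real_poly_fun_cmult:
  assumes "0 < n"
    and "\<And>a. a < n \<Longrightarrow> real_poly_fun n (\<lambda>x. U x a)" "\<And>b. b < n \<Longrightarrow> real_poly_fun n (\<lambda>x. V x b)"
  shows "real_poly_fun n (\<lambda>x. cmult n (U x) (V x) j)"
  unfolding cmult_eq[OF assms(1)] using assms(2,3)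
  by (intro real_poly_fun_sum ballI finite_lessThan real_poly_fun_mult real_poly_fun_const) auto

lemma real_poly_fun_cpow:
  assumes "0 < n"
  shows "real_poly_fun n (\<lambda>x. cpow n x r j)"
proof (induction r arbitrary: j)
  case 0
  show ?case by (simp add: real_poly_fun_const)
next
  case (Suc r)
  then show ?case
    using real_poly_fun_cmult[OF assms, of "\<lambda>x. x" "\<lambda>x. cpow n x r"] real_poly_fun_var by simp
qed

lemma real_poly_fun_cmonomial_sum:
  assumes "0 < n" "finite I"
  shows "real_poly_fun n (\<lambda>y. cmonomial_sum n I s c e y j)"
  unfolding cmonomial_sum_def
  by (intro real_poly_fun_sum ballI assms(2) real_poly_fun_mult real_poly_fun_const
      real_poly_fun_cmult[OF assms(1)] real_poly_fun_cpow[OF assms(1)])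

theorem mainTheorem10:
  fixes k m :: nat and a :: "nat \<Rightarrow> nat \<Rightarrow> real"
  assumes "k \<ge> 1"
    and "\<forall>i\<le>m. a i \<in> vspace (2 * k)"
  shows "\<forall>j < 2 * k. harmonic_poly (2 * k) (\<lambda>x. cpoly (2 * k) a m x j)"
proof (intro allI impI)
  fix j
  have k: "0 < k" using assms(1) by simp
  have p: "(\<lambda>x. cpoly (2 * k) a m x j) = (\<lambda>x. cmonomial_sum (2 * k) {..m} (\<lambda>_. 1) a id x j)"
    by (simp add: cpoly_def cmonomial_sum_def)
  show "harmonic_poly (2 * k) (\<lambda>x. cpoly (2 * k) a m x j)"
    unfolding harmonic_poly_def p
  proof
    show "real_poly_fun (2 * k) (\<lambda>x. cmonomial_sum (2 * k) {..m} (\<lambda>_. 1) a id x j)"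
      using k by (intro real_poly_fun_cmonomial_sum) simp_all
    show "\<forall>x. laplacian (2 * k) (\<lambda>x. cmonomial_sum (2 * k) {..m} (\<lambda>_. 1) a id x j) x = 0"
      using laplacian_cmonomial_sum[OF k] by blast
  qed
qed

end
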